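(* Let $\Gamma$ be a numerical semigroup, let $e'\in\Gamma\setminus\{0\}$ and $\Gamma_{e'}=\{0\}\cup(e'+\Gamma)$. For any $m\in\Gamma$, \[ \mathrm{Ap}(\Gamma_{e'},e'+m)=(e'+\mathrm{Ap}(\Gamma,m))\cup\big(e'+m+(\mathrm{Ap}(\Gamma,e')\setminus\{0\})\big)\cup\{0\}. \]
   Context: A numerical semigroup is a subset of $\mathbb N$ containing $0$, closed under addition, with finite complement. For a numerical semigroup $S$ and $x\in\mathbb Z$, $\mathrm{Ap}(S,x)=\{s\in S: s-x\notin S\}$. *)

theory Defs
  imports Main
begin

definition numerical_semigroup :: "nat set \<Rightarrow> bool" where
  "numerical_semigroup S \<longleftrightarrow> 0 \<in> S \<and> (\<forall>a\<in>S. \<forall>b\<in>S. a + b \<in> S) \<and> finite (UNIV - S)"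

definition apery :: "nat set \<Rightarrow> int \<Rightarrow> nat set" where
  "apery S x = {s \<in> S. \<not> (\<exists>t\<in>S. int t = int s - x)}"

end

theory Submission
  imports Defs
begin

text \<open>Since \<open>\<Gamma>\<^sub>e\<^sub>' + (e' + m) = {e' + m} \<union> (e' + e' + m + \<Gamma>)\<close>, the Apery set of \<open>\<Gamma>\<^sub>e\<^sub>'\<close>
  with respect to \<open>e' + m\<close> consists of \<open>0\<close> and the shifts \<open>e' + s\<close> of those \<open>s \<in> \<Gamma>\<close> that
  avoid \<open>m\<close> and \<open>m + e' + \<Gamma>\<close>. Such an \<open>s\<close> either lies outside \<open>m + \<Gamma>\<close>, i.e. in
  \<open>Ap(\<Gamma>, m)\<close>, or is \<open>m + t\<close> with \<open>t \<in> \<Gamma>\<close> nonzero and outside \<open>e' + \<Gamma>\<close>, i.e. in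
  \<open>Ap(\<Gamma>, e') \<setminus> {0}\<close>.\<close>

lemma apery_eq_diff_image_plus: "apery S (int x) = S - (+) x ` S"
proof -
  have "(\<exists>t\<in>S. int t = int s - int x) \<longleftrightarrow> s \<in> (+) x ` S" for s
  proof
    assume "\<exists>t\<in>S. int t = int s - int x"
    then obtain t where "t \<in> S" "s = x + t"
      by (metis add_diff_cancel_left' diff_add_cancel of_nat_add of_nat_eq_iff)
    then show "s \<in> (+) x ` S" by blast
  qed auto
  then show ?thesis
    by (auto simp: apery_def)
qed

lemma diff_insert_plus_image_split:
  fixes S :: "'a::cancel_comm_monoid_add set"
  assumes zero: "0 \<in> S" and add: "\<And>a b. a \<in> S \<Longrightarrow> b \<in> S \<Longrightarrow> a + b \<in> S"
    and "m \<in> S" and "e \<in> S"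
  shows "S - insert m ((+) (m + e) ` S) =
           (S - (+) m ` S) \<union> (+) m ` (S - (+) e ` S - {0})"
proof -
  have "(+) (m + e) ` S \<subseteq> (+) m ` S"
    using \<open>e \<in> S\<close> add by (auto simp: add.assoc)
  moreover have "m \<in> (+) m ` S"
    using zero by force
  moreover have "(+) m ` S \<subseteq> S"
    using \<open>m \<in> S\<close> add by auto
  ultimately show ?thesis
    by (auto simp: add.assoc)
qed

lemma zero_insert_plus_image_diff:
  fixes e m :: nat
  assumes "e \<noteq> 0"
  shows "insert 0 ((+) e ` S) - (+) (e + m) ` insert 0 ((+) e ` S) =
           insert 0 ((+) e ` (S - insert m ((+) (m + e) ` S)))"
  using assms by (auto simp: ac_simps)

theorem proposition3p2:
  fixes \<Gamma> :: "nat set" and e' m :: nat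
  assumes "numerical_semigroup \<Gamma>"
    and "e' \<in> \<Gamma>" and "e' \<noteq> 0"
    and "m \<in> \<Gamma>"
  shows "apery ({0} \<union> (\<lambda>s. e' + s) ` \<Gamma>) (int (e' + m)) =
           ((\<lambda>s. e' + s) ` apery \<Gamma> (int m))
           \<union> ((\<lambda>s. e' + m + s) ` (apery \<Gamma> (int e') - {0}))
           \<union> {0}"
proof -
  have zero: "0 \<in> \<Gamma>" and add: "\<And>a b. a \<in> \<Gamma> \<Longrightarrow> b \<in> \<Gamma> \<Longrightarrow> a + b \<in> \<Gamma>"
    using assms(1) unfolding numerical_semigroup_def by auto
  have "apery ({0} \<union> (+) e' ` \<Gamma>) (int (e' + m)) =
          insert 0 ((+) e' ` (\<Gamma> - insert m ((+) (m + e') ` \<Gamma>)))"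
    unfolding apery_eq_diff_image_plus insert_is_Un[symmetric]
    by (rule zero_insert_plus_image_diff[OF \<open>e' \<noteq> 0\<close>])
  also have "\<dots> = insert 0 ((+) e' ` ((\<Gamma> - (+) m ` \<Gamma>) \<union> (+) m ` (\<Gamma> - (+) e' ` \<Gamma> - {0})))"
    by (simp only: diff_insert_plus_image_split[OF zero add \<open>m \<in> \<Gamma>\<close> \<open>e' \<in> \<Gamma>\<close>])
  finally show ?thesis
    by (simp add: apery_eq_diff_image_plus image_Un image_image add.assoc insert_commute)
qed

end
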